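(* Let $\Sigma$ be a finite alphabet. The function $d_2:\Sigma^*\times\Sigma^*\to\mathbb{Z}_{\ge0}$, $d_2(u,v)=H(\underline{u},\underline{v})+\lceil |l(u)-l(v)|/2\rceil$, is an integer-valued metric on $\Sigma^*$, and it is Hamming compatible.
   Context: $\Sigma_n$ is the set of words of length $n$ over $\Sigma$, $\Sigma^*$ the set of all finite words, $l(u)$ the length of $u$. $H$ is the Hamming distance between equal-length words. Truncated Hamming function: if $l(u)\ge l(v)$, $\underline{u}$ is the prefix of $u$ of length $l(v)$ and $\underline{v}=v$ (symmetrically otherwise), and $H(\underline{u},\underline{v})$ is the Hamming distance between these equal-length words. A metric $\delta$ on $\Sigma^*$ is Hamming compatible if $\delta(u,v)=H(u,v)$ whenever $l(u)=l(v)$. *)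

theory Defs
  imports Complex_Main
begin

definition hamming :: "'a list \<Rightarrow> 'a list \<Rightarrow> nat" where
  "hamming u v = card {i. i < length u \<and> u ! i \<noteq> v ! i}"

definition trunc_hamming :: "'a list \<Rightarrow> 'a list \<Rightarrow> nat" where
  "trunc_hamming u v =
     hamming (take (min (length u) (length v)) u) (take (min (length u) (length v)) v)"

definition d2 :: "'a list \<Rightarrow> 'a list \<Rightarrow> nat" where
  "d2 u v = trunc_hamming u v
     + nat \<lceil>real_of_int \<bar>int (length u) - int (length v)\<bar> / 2\<rceil>"

definition is_metric :: "('a \<Rightarrow> 'a \<Rightarrow> nat) \<Rightarrow> bool" where
  "is_metric d \<longleftrightarrow> (\<forall>x y. d x y = 0 \<longleftrightarrow> x = y)
                  \<and> (\<forall>x y. d x y = d y x)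
                  \<and> (\<forall>x y z. d x z \<le> d x y + d y z)"

definition hamming_compatible :: "('a list \<Rightarrow> 'a list \<Rightarrow> nat) \<Rightarrow> bool" where
  "hamming_compatible d \<longleftrightarrow> (\<forall>u v. length u = length v \<longrightarrow> d u v = hamming u v)"

end

theory Submission
  imports Defs
begin

(*
  Write m(u,v) for the set of positions i < min(l(u), l(v)) at which u and v
  differ; the truncated Hamming function is |m(u,v)|, and the length term of d2 is the
  half-ceiling ((max - min) + 1) div 2 of the length gap.  So
      d2 u v = |m(u,v)| + g(l(u), l(v)),   g a b = (max a b - min a b + 1) div 2.
  Positivity and symmetry are immediate from this form.  For the triangle inequality,
  every position counted in m(u,w) is counted in m(u,v) or m(v,w), unless it lies beyond
  the end of v; there are at most min(l(u), l(w)) - l(v) such positions.  This surplus is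
  absorbed by the length terms: (min a c - b) + g a c <= g a b + g b c, a statement of
  linear arithmetic.  Hamming compatibility holds because for equal lengths the
  truncation does nothing and the length term vanishes.  None of the lemmas needs the
  alphabet to be finite; finiteness only appears in the final statement.
*)

definition mismatches :: "'a list \<Rightarrow> 'a list \<Rightarrow> nat set" where
  "mismatches u v = {i. i < length u \<and> i < length v \<and> u ! i \<noteq> v ! i}"

definition gap_penalty :: "nat \<Rightarrow> nat \<Rightarrow> nat" where
  "gap_penalty a b = (max a b - min a b + 1) div 2"

lemma gap_penalty_eq_0_iff: "gap_penalty a b = 0 \<longleftrightarrow> a = b"
  unfolding gap_penalty_def by linarith

lemma gap_penalty_commute: "gap_penalty a b = gap_penalty b a"
  unfolding gap_penalty_def by (simp add: max.commute min.commute)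

lemma finite_mismatches: "finite (mismatches u v)"
  unfolding mismatches_def by (rule finite_subset[of _ "{..<length u}"]) auto

lemma mismatches_sym: "mismatches u v = mismatches v u"
  unfolding mismatches_def by auto

lemma trunc_hamming_eq_card_mismatches: "trunc_hamming u v = card (mismatches u v)"
  unfolding trunc_hamming_def hamming_def mismatches_def
  by (rule arg_cong[where f = card]) auto

lemma nat_ceiling_half: "nat \<lceil>real n / 2\<rceil> = (n + 1) div 2"
proof -
  have "\<lceil>real n / 2\<rceil> = int ((n + 1) div 2)"
  proof (rule ceiling_unique)
    consider k where "n = 2 * k" | k where "n = 2 * k + 1"
      by (metis oddE evenE)
    then show "real n / 2 \<le> real_of_int (int ((n + 1) div 2))"
      and "real_of_int (int ((n + 1) div 2)) - 1 < real n / 2"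
      by (cases; simp)+
  qed
  then show ?thesis by simp
qed

lemma d2_eq: "d2 u v = card (mismatches u v) + gap_penalty (length u) (length v)"
proof -
  have "real_of_int \<bar>int (length u) - int (length v)\<bar>
        = real (max (length u) (length v) - min (length u) (length v))"
    by auto
  then show ?thesis
    unfolding d2_def trunc_hamming_eq_card_mismatches gap_penalty_def
    by (simp only: nat_ceiling_half)
qed

lemma card_mismatches_triangle:
  "card (mismatches u w)
     \<le> card (mismatches u v) + card (mismatches v w) + (min (length u) (length w) - length v)"
proof -
  let ?beyond = "{length v..<min (length u) (length w)}"
  have "mismatches u w \<subseteq> mismatches u v \<union> mismatches v w \<union> ?beyond"
    unfolding mismatches_def by auto
  then have "card (mismatches u w) \<le> card (mismatches u v \<union> mismatches v w \<union> ?beyond)"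
    by (intro card_mono) (auto simp: finite_mismatches)
  also have "\<dots> \<le> card (mismatches u v) + card (mismatches v w) + card ?beyond"
    by (meson add_mono card_Un_le le_trans order_refl)
  finally show ?thesis by simp
qed

text \<open>The length penalties pay for the positions beyond the middle word.\<close>
lemma gap_penalty_triangle:
  "(min a c - b) + gap_penalty a c \<le> gap_penalty a b + gap_penalty b c"
  unfolding gap_penalty_def max_def min_def by (auto; presburger)

lemma d2_eq_0_iff: "d2 u v = 0 \<longleftrightarrow> u = v"
proof
  assume d: "d2 u v = 0"
  then have "length u = length v"
    unfolding d2_eq by (simp add: gap_penalty_eq_0_iff)
  moreover from d have "mismatches u v = {}"
    unfolding d2_eq using finite_mismatches[of u v] by simp
  ultimately show "u = v"
    unfolding mismatches_def by (auto intro: nth_equalityI)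
qed (simp add: d2_eq mismatches_def gap_penalty_eq_0_iff)

lemma d2_sym: "d2 u v = d2 v u"
  unfolding d2_eq mismatches_sym[of u v] gap_penalty_commute[of "length u"] ..

lemma d2_triangle: "d2 u w \<le> d2 u v + d2 v w"
  using card_mismatches_triangle[of u w v]
    gap_penalty_triangle[of "length u" "length w" "length v"]
  unfolding d2_eq by linarith

lemma d2_equal_length: "length u = length v \<Longrightarrow> d2 u v = hamming u v"
  unfolding d2_def trunc_hamming_def by simp

theorem proposition2p4:
  shows "is_metric (d2 :: 'a::finite list \<Rightarrow> 'a list \<Rightarrow> nat)
         \<and> hamming_compatible (d2 :: 'a::finite list \<Rightarrow> 'a list \<Rightarrow> nat)"
  unfolding is_metric_def hamming_compatible_def
proof (intro conjI allI impI)
  show "d2 u v = 0 \<longleftrightarrow> u = v" "d2 u v = d2 v u" for u v :: "'a list"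
    by (rule d2_eq_0_iff, rule d2_sym)
  show "d2 u w \<le> d2 u v + d2 v w" for u v w :: "'a list"
    by (rule d2_triangle)
  show "length u = length v \<Longrightarrow> d2 u v = hamming u v" for u v :: "'a list"
    by (rule d2_equal_length)
qed

end
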